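(* For any $i,j\in[n]$ the real line bundles $E_{2,i}(L)$ and $E_{2,j}(L)$ over $M_2(L)$ are isomorphic.
   Context: Let $n\ge 4$, $[n]=\{1,\dots,n\}$, and $L=(l_1,\dots,l_n)$ with all $l_i>0$, generic in the sense that $\sum_{i\in I}\pm l_i\neq 0$ for every nonempty $I\subseteq[n]$ and every choice of signs. Let $\widetilde M_2(L)=\{(u_1,\dots,u_n)\in(S^1)^n:\sum_i l_iu_i=0\}$ and $M_2(L)=\widetilde M_2(L)/O(2)$, a smooth closed manifold of dimension $n-3$. The tautological line bundle $E_{2,i}(L)$ is the real line bundle over $M_2(L)$ obtained as the quotient by $O(2)$ of the bundle over $\widetilde M_2(L)$ whose fiber at $(u_1,\dots,u_n)$ is the tangent line $T_{u_i}S^1$. *)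

theory Defs
  imports "HOL-Analysis.Analysis"
begin

text \<open>The plane R^2 is modelled as the complex numbers; S^1 is the unit circle.
Configurations (u_1,...,u_n) are functions nat => complex, extensional (zero outside 1..n).\<close>

definition S1tan :: "complex \<Rightarrow> complex set" where
  "S1tan w = {v. Re (v * cnj w) = 0}"

definition O2 :: "(complex \<Rightarrow> complex) set" where
  "O2 = {g. \<exists>a. norm a = 1 \<and> (g = (\<lambda>z. a * z) \<or> g = (\<lambda>z. a * cnj z))}"

definition Mtilde :: "nat \<Rightarrow> (nat \<Rightarrow> real) \<Rightarrow> (nat \<Rightarrow> complex) set" where
  "Mtilde n l = {u. (\<forall>i\<in>{1..n}. norm (u i) = 1) \<and> (\<forall>i. i \<notin> {1..n} \<longrightarrow> u i = 0)
                    \<and> (\<Sum>i=1..n. complex_of_real (l i) * u i) = 0}"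

definition Mrel :: "nat \<Rightarrow> (nat \<Rightarrow> real) \<Rightarrow> ((nat \<Rightarrow> complex) \<times> (nat \<Rightarrow> complex)) set" where
  "Mrel n l = {(u, u'). u \<in> Mtilde n l \<and> u' \<in> Mtilde n l \<and> (\<exists>g\<in>O2. u' = g \<circ> u)}"

definition M2 :: "nat \<Rightarrow> (nat \<Rightarrow> real) \<Rightarrow> (nat \<Rightarrow> complex) set set" where
  "M2 n l = Mtilde n l // Mrel n l"

definition Etilde :: "nat \<Rightarrow> (nat \<Rightarrow> real) \<Rightarrow> nat \<Rightarrow> ((nat \<Rightarrow> complex) \<times> complex) set" where
  "Etilde n l i = {(u, v). u \<in> Mtilde n l \<and> v \<in> S1tan (u i)}"

text \<open>O(2) acts diagonally (it is linear, so it is its own differential).\<close>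
definition Erel :: "nat \<Rightarrow> (nat \<Rightarrow> real) \<Rightarrow> nat
     \<Rightarrow> (((nat \<Rightarrow> complex) \<times> complex) \<times> ((nat \<Rightarrow> complex) \<times> complex)) set" where
  "Erel n l i = {((u, v), (u', v')). (u, v) \<in> Etilde n l i \<and> (u', v') \<in> Etilde n l i
                   \<and> (\<exists>g\<in>O2. u' = g \<circ> u \<and> v' = g v)}"

definition E2 :: "nat \<Rightarrow> (nat \<Rightarrow> real) \<Rightarrow> nat \<Rightarrow> ((nat \<Rightarrow> complex) \<times> complex) set set" where
  "E2 n l i = Etilde n l i // Erel n l i"

definition E2proj :: "nat \<Rightarrow> (nat \<Rightarrow> real) \<Rightarrow> ((nat \<Rightarrow> complex) \<times> complex) set
     \<Rightarrow> (nat \<Rightarrow> complex) set" where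
  "E2proj n l e = Mrel n l `` (fst ` e)"

definition quot_top :: "'a topology \<Rightarrow> 'a set set \<Rightarrow> 'a set topology" where
  "quot_top X P = topology (\<lambda>U. U \<subseteq> P \<and> openin X (\<Union>U))"

definition E2top :: "nat \<Rightarrow> (nat \<Rightarrow> real) \<Rightarrow> nat \<Rightarrow> ((nat \<Rightarrow> complex) \<times> complex) set topology" where
  "E2top n l i = quot_top (subtopology euclidean (Etilde n l i)) (E2 n l i)"

text \<open>The fibre over the class of u
is identified (via the representative u) with T_{u_i}S^1 = R * (i u_i).\<close>
definition E2_iso :: "nat \<Rightarrow> (nat \<Rightarrow> real) \<Rightarrow> nat \<Rightarrow> nat
     \<Rightarrow> (((nat \<Rightarrow> complex) \<times> complex) set \<Rightarrow> ((nat \<Rightarrow> complex) \<times> complex) set) \<Rightarrow> bool" where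
  "E2_iso n l i j f \<longleftrightarrow>
     homeomorphic_map (E2top n l i) (E2top n l j) f
   \<and> (\<forall>e\<in>E2 n l i. E2proj n l (f e) = E2proj n l e)
   \<and> (\<forall>u\<in>Mtilde n l. \<exists>c::real. \<forall>t::real.
         f (Erel n l i `` {(u, complex_of_real t * \<i> * u i)})
           = Erel n l j `` {(u, complex_of_real (c * t) * \<i> * u j)})"

definition generic_lengths :: "nat \<Rightarrow> (nat \<Rightarrow> real) \<Rightarrow> bool" where
  "generic_lengths n l \<longleftrightarrow> (\<forall>I \<subseteq> {1..n}. I \<noteq> {} \<longrightarrow>
      (\<forall>\<epsilon>::nat \<Rightarrow> real. (\<forall>k\<in>I. \<epsilon> k = 1 \<or> \<epsilon> k = -1) \<longrightarrow> (\<Sum>k\<in>I. \<epsilon> k * l k) \<noteq> 0))"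

end

theory Submission
  imports Defs
begin

text \<open>Multiplication by \<open>u\<^sub>j / u\<^sub>i\<close>, the rotation carrying \<open>u\<^sub>i\<close> to \<open>u\<^sub>j\<close>, maps
\<open>T\<^bsub>u\<^sub>i\<^esub>S\<^sup>1\<close> linearly onto \<open>T\<^bsub>u\<^sub>j\<^esub>S\<^sup>1\<close>. Since it is built from the configuration itself it
commutes with \<open>O(2)\<close> (a reflection conjugates both the tangent vector and \<open>u\<^sub>j / u\<^sub>i\<close>), so it
descends to an isomorphism of the quotient line bundles.\<close>

lemma openin_quot_top:
  assumes "equiv A r" "topspace X = A"
  shows "openin (quot_top X (A//r)) U \<longleftrightarrow> U \<subseteq> A//r \<and> openin X (\<Union>U)"
proof -
  have "\<Union>(S \<inter> T) = \<Union>S \<inter> \<Union>T" if "S \<subseteq> A//r" "T \<subseteq> A//r" for S T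
    using quotient_disj[OF assms(1)] that by blast
  moreover have "openin X (\<Union>(\<Union>K))" if "\<forall>S\<in>K. openin X (\<Union>S)" for K
  proof -
    have "\<Union>(\<Union>K) = \<Union>(Union ` K)" by blast
    with that show ?thesis by auto
  qed
  ultimately have "istopology (\<lambda>U. U \<subseteq> A//r \<and> openin X (\<Union>U))"
    unfolding istopology_def by auto
  then show ?thesis
    unfolding quot_top_def by simp
qed

lemma topspace_quot_top:
  assumes "equiv A r" "topspace X = A"
  shows "topspace (quot_top X (A//r)) = A//r"
proof -
  have "openin (quot_top X (A//r)) (A//r)"
    using openin_quot_top[OF assms] Union_quotient[OF assms(1)] openin_topspace[of X] assms(2) by simp
  then show ?thesis
    using openin_quot_top[OF assms] openin_subset by blast
qed

lemma continuous_map_quot_top_image: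
  assumes r: "equiv A r" and s: "equiv B s"
    and X: "topspace X = A" and Y: "topspace Y = B"
    and f: "continuous_map X Y f"
    and classes: "\<And>x. x \<in> A \<Longrightarrow> f ` (r `` {x}) = s `` {f x}"
  shows "continuous_map (quot_top X (A//r)) (quot_top Y (B//s)) (\<lambda>e. f ` e)"
proof -
  have fA: "f x \<in> B" if "x \<in> A" for x
    using f X Y that by (auto simp: continuous_map_def)
  have image_class: "f ` e \<in> B//s" if "e \<in> A//r" for e
    using that classes fA by (auto elim!: quotientE intro!: quotientI)
  have "openin (quot_top X (A//r)) {e \<in> A//r. f ` e \<in> U}"
    if U: "U \<subseteq> B//s" "openin Y (\<Union>U)" for U
  proof -
    have "\<Union>{e \<in> A//r. f ` e \<in> U} = {x \<in> topspace X. f x \<in> \<Union>U}"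
    proof (rule set_eqI, rule iffI)
      fix x assume "x \<in> \<Union>{e \<in> A//r. f ` e \<in> U}"
      then show "x \<in> {x \<in> topspace X. f x \<in> \<Union>U}"
        using X Union_quotient[OF r] by blast
    next
      fix x assume x: "x \<in> {x \<in> topspace X. f x \<in> \<Union>U}"
      then obtain W where "W \<in> U" "f x \<in> W" by blast
      then have "W = s `` {f x}"
        using U(1) s by (metis Image_singleton_iff equiv_class_eq quotientE subsetD)
      then have "r `` {x} \<in> {e \<in> A//r. f ` e \<in> U}"
        using x X classes \<open>W \<in> U\<close> by (auto intro: quotientI)
      moreover have "x \<in> r `` {x}"
        using x X equiv_class_self[OF r] by simp
      ultimately show "x \<in> \<Union>{e \<in> A//r. f ` e \<in> U}" by blast
    qed
    then show ?thesis
      using openin_continuous_map_preimage[OF f U(2)] openin_quot_top[OF r X] by auto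
  qed
  then show ?thesis
    unfolding continuous_map_def
    by (auto simp: topspace_quot_top[OF r X] topspace_quot_top[OF s Y] openin_quot_top[OF s Y] image_class)
qed

lemma S1tan_rotate:
  assumes "norm a = 1" "norm b = 1" "v \<in> S1tan a"
  shows "v * b / a \<in> S1tan b"
proof -
  have "v * b / a * cnj b = v * cnj a * (b * cnj b)"
    using assms(1) by (simp add: divide_conv_cnj)
  also have "\<dots> = v * cnj a"
    using assms(2) by (simp flip: complex_norm_square)
  finally show ?thesis using assms(3) unfolding S1tan_def mem_Collect_eq by simp
qed

lemma S1tan_normal_multiple: "of_real t * \<i> * a \<in> S1tan a"
proof -
  have "of_real t * \<i> * a * cnj a = of_real (t * (norm a)\<^sup>2) * \<i>"
    by (simp flip: complex_norm_square add: algebra_simps)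
  then show ?thesis unfolding S1tan_def mem_Collect_eq by simp
qed

lemma rotation_in_O2: "norm a = 1 \<Longrightarrow> (\<lambda>z. a * z) \<in> O2"
  and reflection_in_O2: "norm a = 1 \<Longrightarrow> (\<lambda>z. a * cnj z) \<in> O2"
  unfolding O2_def by auto

lemma O2_cases:
  assumes "g \<in> O2"
  obtains a where "norm a = 1" "g = (\<lambda>z. a * z)" | a where "norm a = 1" "g = (\<lambda>z. a * cnj z)"
  using assms unfolding O2_def by blast

lemma O2_comp:
  assumes "g \<in> O2" "h \<in> O2" shows "h \<circ> g \<in> O2"
  using assms(1)
proof (cases rule: O2_cases)
  case (1 a)
  from assms(2) show ?thesis
    by (cases rule: O2_cases)
      (use 1 rotation_in_O2[of "_ * a"] reflection_in_O2[of "_ * cnj a"] in \<open>auto simp: o_def norm_mult mult.assoc\<close>)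
next
  case (2 a)
  from assms(2) show ?thesis
    by (cases rule: O2_cases)
      (use 2 rotation_in_O2[of "_ * cnj a"] reflection_in_O2[of "_ * a"] in \<open>auto simp: o_def norm_mult mult.assoc\<close>)
qed

lemma O2_inverse:
  assumes "g \<in> O2" obtains h where "h \<in> O2" "\<And>z. h (g z) = z"
  using assms
proof (cases rule: O2_cases)
  case (1 a)
  then have "\<And>z. cnj a * g z = z"
    by (simp add: mult.assoc[symmetric] complex_norm_square[symmetric] mult.commute[of "cnj a"])
  then show ?thesis using that rotation_in_O2[of "cnj a"] 1 by auto
next
  case (2 a)
  then have "\<And>z. a * cnj (g z) = z"
    by (simp add: mult.assoc[symmetric] complex_norm_square[symmetric])
  then show ?thesis using that assms 2 by blast
qed

lemma equiv_Erel: "equiv (Etilde n l i) (Erel n l i)"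
proof (rule equivI)
  show "Erel n l i \<subseteq> Etilde n l i \<times> Etilde n l i"
    unfolding Erel_def by auto
  show "refl_on (Etilde n l i) (Erel n l i)"
    unfolding refl_on_def Erel_def using rotation_in_O2[of 1] by (auto simp: o_def)
  show "sym (Erel n l i)"
  proof (rule symI)
    fix x y assume "(x, y) \<in> Erel n l i"
    then obtain u v g where "x = (u, v)" "y = (g \<circ> u, g v)" "g \<in> O2" "x \<in> Etilde n l i" "y \<in> Etilde n l i"
      unfolding Erel_def by blast
    moreover obtain h where "h \<in> O2" "\<And>z. h (g z) = z" using O2_inverse \<open>g \<in> O2\<close> by blast
    ultimately show "(y, x) \<in> Erel n l i" unfolding Erel_def by (auto simp: o_def intro!: bexI[of _ h])
  qed
  show "trans (Erel n l i)"
    unfolding trans_def Erel_def using O2_comp by (fastforce simp: o_def)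
qed

lemma Mtilde_norm: "u \<in> Mtilde n l \<Longrightarrow> k \<in> {1..n} \<Longrightarrow> norm (u k) = 1"
  unfolding Mtilde_def by blast

definition fibre_rotation :: "nat \<Rightarrow> nat \<Rightarrow> (nat \<Rightarrow> complex) \<times> complex \<Rightarrow> (nat \<Rightarrow> complex) \<times> complex" where
  "fibre_rotation i j = (\<lambda>(u, v). (u, v * u j / u i))"

lemma fst_fibre_rotation [simp]: "fst (fibre_rotation i j x) = fst x"
  by (cases x) (simp add: fibre_rotation_def)

lemma fibre_rotation_in_Etilde:
  assumes "x \<in> Etilde n l i" "i \<in> {1..n}" "j \<in> {1..n}"
  shows "fibre_rotation i j x \<in> Etilde n l j"
  using assms S1tan_rotate Mtilde_norm by (auto simp: Etilde_def fibre_rotation_def)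

lemma fibre_rotation_inverse:
  assumes "x \<in> Etilde n l i" "i \<in> {1..n}" "j \<in> {1..n}"
  shows "fibre_rotation j i (fibre_rotation i j x) = x"
proof -
  have "fst x i \<noteq> 0" "fst x j \<noteq> 0"
    using assms Mtilde_norm[of "fst x"] by (force simp: Etilde_def)+
  then show ?thesis by (cases x) (simp add: fibre_rotation_def)
qed

lemma fibre_rotation_O2_commute:
  assumes "g \<in> O2"
  shows "fibre_rotation i j (g \<circ> u, g v) = (g \<circ> u, g (v * u j / u i))"
  using assms
proof (cases rule: O2_cases)
  case (1 a)
  then have "a \<noteq> 0" by auto
  with 1 show ?thesis by (simp add: fibre_rotation_def)
qed (simp add: fibre_rotation_def)

lemma Erel_fibre_rotation:
  assumes "(x, y) \<in> Erel n l i" "i \<in> {1..n}" "j \<in> {1..n}"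
  shows "(fibre_rotation i j x, fibre_rotation i j y) \<in> Erel n l j"
proof -
  obtain u v g where x: "x = (u, v)" and y: "y = (g \<circ> u, g v)" and "g \<in> O2"
    and "x \<in> Etilde n l i" "y \<in> Etilde n l i"
    using assms(1) unfolding Erel_def by blast
  then have "fibre_rotation i j x \<in> Etilde n l j" "fibre_rotation i j y \<in> Etilde n l j"
    using fibre_rotation_in_Etilde assms(2,3) by blast+
  moreover have "fibre_rotation i j x = (u, v * u j / u i)"
    and "fibre_rotation i j y = (g \<circ> u, g (v * u j / u i))"
    using x y fibre_rotation_O2_commute[OF \<open>g \<in> O2\<close>] by (simp_all add: fibre_rotation_def)
  ultimately show ?thesis
    unfolding Erel_def using \<open>g \<in> O2\<close> by auto
qed

lemma fibre_rotation_Erel_class: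
  assumes "x \<in> Etilde n l i" "i \<in> {1..n}" "j \<in> {1..n}"
  shows "fibre_rotation i j ` (Erel n l i `` {x}) = Erel n l j `` {fibre_rotation i j x}"
proof
  show "fibre_rotation i j ` (Erel n l i `` {x}) \<subseteq> Erel n l j `` {fibre_rotation i j x}"
    using Erel_fibre_rotation[OF _ assms(2,3)] by blast
  show "Erel n l j `` {fibre_rotation i j x} \<subseteq> fibre_rotation i j ` (Erel n l i `` {x})"
  proof
    fix y assume "y \<in> Erel n l j `` {fibre_rotation i j x}"
    then have "(fibre_rotation i j x, y) \<in> Erel n l j" by simp
    moreover from this have "y \<in> Etilde n l j" unfolding Erel_def by auto
    ultimately have "(x, fibre_rotation j i y) \<in> Erel n l i"
      and "y = fibre_rotation i j (fibre_rotation j i y)"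
      using Erel_fibre_rotation[OF _ assms(3,2)] fibre_rotation_inverse assms by metis+
    then show "y \<in> fibre_rotation i j ` (Erel n l i `` {x})" by blast
  qed
qed

lemma continuous_on_fibre_rotation:
  assumes "i \<in> {1..n}"
  shows "continuous_on (Etilde n l i) (fibre_rotation i j)"
proof -
  have unfold: "fibre_rotation i j = (\<lambda>x. (fst x, snd x * fst x j / fst x i))"
    by (auto simp: fibre_rotation_def fun_eq_iff)
  have coord: "continuous_on (Etilde n l i) (\<lambda>x. fst x k)" for k
    by (rule continuous_on_product_then_coordinatewise[OF continuous_on_fst[OF continuous_on_id]])
  have "fst x i \<noteq> 0" if "x \<in> Etilde n l i" for x
    using that assms Mtilde_norm[of "fst x"] by (force simp: Etilde_def)
  then show ?thesis
    unfolding unfold by (intro continuous_intros coord) auto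
qed

lemma topspace_E2top: "topspace (E2top n l i) = E2 n l i"
  unfolding E2top_def E2_def by (rule topspace_quot_top[OF equiv_Erel]) simp

lemma continuous_map_E2top_fibre_rotation:
  assumes "i \<in> {1..n}" "j \<in> {1..n}"
  shows "continuous_map (E2top n l i) (E2top n l j) (\<lambda>e. fibre_rotation i j ` e)"
  unfolding E2top_def E2_def
proof (rule continuous_map_quot_top_image[OF equiv_Erel equiv_Erel])
  show "continuous_map (top_of_set (Etilde n l i)) (top_of_set (Etilde n l j)) (fibre_rotation i j)"
    using continuous_on_fibre_rotation fibre_rotation_in_Etilde assms
    by (auto simp: continuous_map_in_subtopology)
qed (use fibre_rotation_Erel_class assms in auto)

lemma fibre_rotation_image_inverse:
  assumes "e \<in> E2 n l i" "i \<in> {1..n}" "j \<in> {1..n}"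
  shows "fibre_rotation j i ` fibre_rotation i j ` e = e"
proof -
  have "e \<subseteq> Etilde n l i"
    using assms(1) in_quotient_imp_subset[OF equiv_Erel] unfolding E2_def by blast
  then show ?thesis
    using fibre_rotation_inverse assms(2,3) by (force simp: image_image)
qed

theorem mainTheorem2:
  fixes n :: nat and l :: "nat \<Rightarrow> real" and i j :: nat
  assumes "n \<ge> 4"
    and "\<forall>k\<in>{1..n}. l k > 0"
    and "generic_lengths n l"
    and "i \<in> {1..n}" and "j \<in> {1..n}"
  shows "\<exists>f. E2_iso n l i j f"
proof
  note ij = assms(4,5)
  let ?f = "\<lambda>e. fibre_rotation i j ` e"
  have "homeomorphic_map (E2top n l i) (E2top n l j) ?f"
    unfolding homeomorphic_map_maps homeomorphic_maps_def
    using continuous_map_E2top_fibre_rotation[OF ij] continuous_map_E2top_fibre_rotation[OF ij(2,1)]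
      fibre_rotation_image_inverse[OF _ ij] fibre_rotation_image_inverse[OF _ ij(2,1)]
    by (intro exI[of _ "\<lambda>e. fibre_rotation j i ` e"]) (auto simp: topspace_E2top)
  moreover have "E2proj n l (?f e) = E2proj n l e" for e
    unfolding E2proj_def by (simp add: image_image)
  moreover have "?f (Erel n l i `` {(u, of_real t * \<i> * u i)})
      = Erel n l j `` {(u, of_real (1 * t) * \<i> * u j)}" if "u \<in> Mtilde n l" for u t
  proof -
    have "(u, of_real t * \<i> * u i) \<in> Etilde n l i"
      using that S1tan_normal_multiple by (simp add: Etilde_def)
    moreover have "u i \<noteq> 0"
      using Mtilde_norm[OF that ij(1)] by force
    then have "fibre_rotation i j (u, of_real t * \<i> * u i) = (u, of_real (1 * t) * \<i> * u j)"
      by (simp add: fibre_rotation_def)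
    ultimately show ?thesis
      using fibre_rotation_Erel_class[OF _ ij] by metis
  qed
  ultimately show "E2_iso n l i j ?f"
    unfolding E2_iso_def by blast
qed

end
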